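(* Let $n\ge 3$, $k\ge 1$ and $p\in\{0,1,2\}$. Then \[ \Gamma_{\rm S}(C_n,C_{3k+p})= \begin{cases} kn, & p=0,\\ kn+\lceil n/3\rceil, & p=1,\\ (k+1)n, & p=2. \end{cases} \]
   Context: $C_m$ denotes the cycle on $m$ vertices; $\gamma$ denotes the domination number. For graphs $G,H$ and a function $f\colon V(G)\to V(H)$, the Sierpiński product $G\otimes_f H$ is the graph with vertex set $V(G)\times V(H)$ and edges of two types: (type 1) $(g,h)(g,h')$ for every $g\in V(G)$ and every edge $hh'\in E(H)$; (type 2) $(g,f(g'))(g',f(g))$ for every edge $gg'\in E(G)$. The upper Sierpiński domination number is $\Gamma_{\rm S}(G,H)=\max_{f}\gamma(G\otimes_f H)$ over all functions $f\colon V(G)\to V(H)$. *)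

theory Defs
  imports Complex_Main
begin

text \<open>A (finite simple) graph is represented by a vertex set together with an
adjacency predicate; only adjacencies between vertices of the vertex set matter.\<close>

type_synonym 'v graph = "'v set \<times> ('v \<Rightarrow> 'v \<Rightarrow> bool)"

definition verts :: "'v graph \<Rightarrow> 'v set" where "verts G = fst G"
definition adj :: "'v graph \<Rightarrow> 'v \<Rightarrow> 'v \<Rightarrow> bool" where "adj G = snd G"

definition cycle_graph :: "nat \<Rightarrow> nat graph" where
  "cycle_graph m = ({0..<m},
     (\<lambda>i j. i < m \<and> j < m \<and> i \<noteq> j \<and> (j = (i + 1) mod m \<or> i = (j + 1) mod m)))"

definition dominating_set :: "'v graph \<Rightarrow> 'v set \<Rightarrow> bool" where
  "dominating_set G D \<longleftrightarrow> D \<subseteq> verts G \<and>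
     (\<forall>v \<in> verts G. v \<in> D \<or> (\<exists>u \<in> D. adj G u v))"

definition domination_number :: "'v graph \<Rightarrow> nat" where
  "domination_number G = Min (card ` {D. dominating_set G D})"

text \<open>Sierpinski product G \<otimes>_f H: vertex set V(G) \<times> V(H); type-1 edges
(g,h)(g,h') for hh' \<in> E(H); type-2 edges (g,f g')(g',f g) for gg' \<in> E(G).\<close>
definition sierpinski_product :: "'a graph \<Rightarrow> 'b graph \<Rightarrow> ('a \<Rightarrow> 'b) \<Rightarrow> ('a \<times> 'b) graph" where
  "sierpinski_product G H f = (verts G \<times> verts H,
     (\<lambda>x y. x \<in> verts G \<times> verts H \<and> y \<in> verts G \<times> verts H \<and>
        ((fst x = fst y \<and> adj H (snd x) (snd y)) \<or>
         (adj G (fst x) (fst y) \<and> snd x = f (fst y) \<and> snd y = f (fst x)))))"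

text \<open>Upper Sierpinski domination number: maximum over all f : V(G) \<rightarrow> V(H).
Only the values of f on V(G) matter.\<close>
definition upper_sierpinski_domination :: "'a graph \<Rightarrow> 'b graph \<Rightarrow> nat" where
  "upper_sierpinski_domination G H =
     Max {domination_number (sierpinski_product G H f) | f. f ` verts G \<subseteq> verts H}"

end

theory Submission
  imports Defs
begin

text \<open>Let \<open>D\<close> dominate \<open>C_n \<otimes>_f C_m\<close> and let \<open>D_g\<close> be its fibre over the copy
  \<open>g\<close>. Inside the copy, \<open>D_g\<close> dominates at most \<open>3 |D_g|\<close> vertices, and type-2 edges dominate at
  most two more (one if \<open>f\<close> is constant). Hence \<open>|D_g| \<ge> k\<close> for \<open>m = 3k\<close> and any \<open>f\<close>, and
  \<open>|D_g| \<ge> k + 1\<close> for \<open>m = 3k + 2\<close> and constant \<open>f\<close>. For \<open>m = 3k + 1\<close> and \<open>f = 0\<close>, a fibre of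
  size \<open>k\<close> leaves the vertex \<open>0\<close> of its copy to a neighbouring copy \<open>g'\<close> with \<open>(g', 0) \<in> D\<close>,
  and then \<open>|D_g'| \<ge> k + 1\<close>; so the copies with larger fibres dominate \<open>C_n\<close>, and there are at
  least \<open>\<lceil>n/3\<rceil>\<close> of them.

  For \<open>m \<noteq> 3k + 1\<close> every copy takes a minimum dominating set of \<open>C_m\<close>. For
  \<open>m = 3k + 1\<close> the copies \<open>h \<equiv> 0 (mod 3)\<close> are hubs holding a dominating set of size \<open>k + 1\<close>
  through the vertices \<open>f (h - 1)\<close> and \<open>f (h + 1)\<close>; every other copy \<open>g\<close> has the vertex \<open>f h\<close>
  of a neighbouring hub \<open>h\<close> dominated by the type-2 edge from \<open>(h, f g)\<close>, and covers the remaining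
  path of \<open>3k\<close> vertices with \<open>k\<close> vertices.\<close>

definition closed_nbhd :: "'v graph \<Rightarrow> 'v set \<Rightarrow> 'v set" where
  "closed_nbhd G X = {v \<in> verts G. v \<in> X \<or> (\<exists>u\<in>X. adj G u v)}"

lemma dominating_set_iff_closed_nbhd:
  "dominating_set G D \<longleftrightarrow> D \<subseteq> verts G \<and> verts G \<subseteq> closed_nbhd G D"
  by (auto simp: dominating_set_def closed_nbhd_def)

lemma finite_card_dominating_sets:
  assumes "finite (verts G)"
  shows "finite (card ` {D. dominating_set G D})"
proof -
  have "card ` {D. dominating_set G D} \<subseteq> card ` Pow (verts G)"
    by (auto simp: dominating_set_def)
  thus ?thesis using assms finite_subset by blast
qed

lemma domination_number_le:
  "finite (verts G) \<Longrightarrow> dominating_set G D \<Longrightarrow> domination_number G \<le> card D"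
  unfolding domination_number_def by (auto intro: Min_le finite_card_dominating_sets)

lemma domination_number_geI:
  assumes "finite (verts G)" and "\<And>D. dominating_set G D \<Longrightarrow> B \<le> card D"
  shows "B \<le> domination_number G"
proof -
  have "dominating_set G (verts G)" by (simp add: dominating_set_def)
  hence "domination_number G \<in> card ` {D. dominating_set G D}"
    unfolding domination_number_def
    by (intro Min_in finite_card_dominating_sets assms(1)) auto
  thus ?thesis using assms(2) by auto
qed

lemma domination_number_le_card_verts:
  "finite (verts G) \<Longrightarrow> domination_number G \<le> card (verts G)"
  by (rule domination_number_le) (auto simp: dominating_set_def)

section \<open>Sierpinski products and their dominating sets\<close>

lemma verts_sierpinski_product [simp]:
  "verts (sierpinski_product G H f) = verts G \<times> verts H"
  by (simp add: sierpinski_product_def verts_def)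

lemma adj_sierpinski_product:
  "adj (sierpinski_product G H f) x y \<longleftrightarrow>
     x \<in> verts G \<times> verts H \<and> y \<in> verts G \<times> verts H \<and>
     ((fst x = fst y \<and> adj H (snd x) (snd y)) \<or>
      (adj G (fst x) (fst y) \<and> snd x = f (fst y) \<and> snd y = f (fst x)))"
  by (simp add: sierpinski_product_def adj_def verts_def)

lemma upper_sierpinski_domination_eqI:
  assumes "finite (verts G)" "finite (verts H)"
    and "f\<^sub>0 ` verts G \<subseteq> verts H"
    and "\<And>f. f ` verts G \<subseteq> verts H \<Longrightarrow> domination_number (sierpinski_product G H f) \<le> B"
    and "\<And>D. dominating_set (sierpinski_product G H f\<^sub>0) D \<Longrightarrow> B \<le> card D"
  shows "upper_sierpinski_domination G H = B"
  unfolding upper_sierpinski_domination_def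
proof (rule Max_eqI)
  let ?dom = "\<lambda>f. domination_number (sierpinski_product G H f)"
  have "?dom f \<le> card (verts G \<times> verts H)" for f
    using domination_number_le_card_verts[of "sierpinski_product G H f"] assms(1,2) by simp
  hence "{?dom f |f. f ` verts G \<subseteq> verts H} \<subseteq> {..card (verts G \<times> verts H)}"
    by blast
  thus "finite {?dom f |f. f ` verts G \<subseteq> verts H}"
    by (rule finite_subset) simp
  have "?dom f\<^sub>0 = B"
  proof (rule antisym)
    show "?dom f\<^sub>0 \<le> B" by (rule assms(4)[OF assms(3)])
    show "B \<le> ?dom f\<^sub>0"
      by (rule domination_number_geI) (use assms(1,2,5) in simp_all)
  qed
  thus "B \<in> {?dom f |f. f ` verts G \<subseteq> verts H}"
    using assms(3) by blast
qed (use assms(4) in blast)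

definition fibre :: "('a \<times> 'b) set \<Rightarrow> 'a \<Rightarrow> 'b set" where
  "fibre D g = {h. (g, h) \<in> D}"

lemma card_eq_sum_card_fibre:
  assumes "D \<subseteq> A \<times> B" "finite A" "finite B"
  shows "card D = (\<Sum>g\<in>A. card (fibre D g))"
proof -
  have "D = Sigma A (fibre D)" using assms(1) by (auto simp: fibre_def)
  moreover have "finite (fibre D g)" for g
    using assms(1,3) by (auto simp: fibre_def intro: finite_subset)
  ultimately show ?thesis using assms(2) by (metis card_SigmaI)
qed

text \<open>Outside its own copy of \<open>H\<close>, a vertex \<open>(g, x)\<close> can only be dominated through a type-2
  edge, which requires \<open>x = f g'\<close> and \<open>(g', f g) \<in> D\<close> for a neighbour \<open>g'\<close> of \<open>g\<close>.\<close>

lemma dominating_set_sierpinski_product_iff: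
  "dominating_set (sierpinski_product G H f) D \<longleftrightarrow> D \<subseteq> verts G \<times> verts H \<and>
     (\<forall>g\<in>verts G. verts H \<subseteq> closed_nbhd H (fibre D g) \<union>
        f ` {g' \<in> verts G. adj G g' g \<and> (g', f g) \<in> D})"
  (is "?dom \<longleftrightarrow> ?sub \<and> ?cover")
proof
  assume ?dom
  hence sub: ?sub by (simp add: dominating_set_def)
  have "x \<in> closed_nbhd H (fibre D g) \<union> f ` {g' \<in> verts G. adj G g' g \<and> (g', f g) \<in> D}"
    if "g \<in> verts G" "x \<in> verts H" for g x
  proof -
    have "(g, x) \<in> D \<or> (\<exists>u\<in>D. adj (sierpinski_product G H f) u (g, x))"
      using \<open>?dom\<close> that by (auto simp: dominating_set_def)
    thus ?thesis
      using that sub by (auto simp: closed_nbhd_def fibre_def adj_sierpinski_product)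
  qed
  thus "?sub \<and> ?cover" using sub by blast
next
  assume "?sub \<and> ?cover"
  hence sub: ?sub and cover: ?cover by blast+
  have "(g, x) \<in> closed_nbhd (sierpinski_product G H f) D"
    if g: "g \<in> verts G" and x: "x \<in> verts H" for g x
  proof -
    from cover g x consider "x \<in> closed_nbhd H (fibre D g)"
      | g' where "g' \<in> verts G" "adj G g' g" "(g', f g) \<in> D" "x = f g'"
      by blast
    thus ?thesis
    proof cases
      case 1
      thus ?thesis using g x sub
        by (auto simp: closed_nbhd_def fibre_def adj_sierpinski_product)
    next
      case 2
      hence "adj (sierpinski_product G H f) (g', f g) (g, x)"
        using g x sub by (auto simp: adj_sierpinski_product)
      thus ?thesis using 2 g x by (auto simp: closed_nbhd_def)
    qed
  qed
  thus ?dom using sub by (auto simp: dominating_set_iff_closed_nbhd)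
qed

lemma domination_number_sierpinski_product_le:
  assumes "finite (verts G)" "finite (verts H)"
    and "\<And>g. g \<in> verts G \<Longrightarrow> C g \<subseteq> verts H"
    and "\<And>g. g \<in> verts G \<Longrightarrow> verts H \<subseteq> closed_nbhd H (C g) \<union>
           f ` {g' \<in> verts G. adj G g' g \<and> f g \<in> C g'}"
  shows "domination_number (sierpinski_product G H f) \<le> (\<Sum>g\<in>verts G. card (C g))"
proof -
  let ?D = "Sigma (verts G) C"
  have fibre_D: "fibre ?D g = C g" if "g \<in> verts G" for g
    using that by (auto simp: fibre_def)
  have "dominating_set (sierpinski_product G H f) ?D"
    unfolding dominating_set_sierpinski_product_iff
  proof (intro conjI ballI)
    fix g assume g: "g \<in> verts G"
    have "{g' \<in> verts G. adj G g' g \<and> f g \<in> C g'} = {g' \<in> verts G. adj G g' g \<and> (g', f g) \<in> ?D}"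
      by auto
    thus "verts H \<subseteq> closed_nbhd H (fibre ?D g) \<union> f ` {g' \<in> verts G. adj G g' g \<and> (g', f g) \<in> ?D}"
      using assms(4)[OF g] fibre_D[OF g] by simp
  qed (use assms(3) in auto)
  hence "domination_number (sierpinski_product G H f) \<le> card ?D"
    using assms(1,2) by (intro domination_number_le) auto
  also have "\<dots> = (\<Sum>g\<in>verts G. card (C g))"
    using assms(1-3) by (intro card_SigmaI) (auto intro: finite_subset)
  finally show ?thesis .
qed

section \<open>Cycles\<close>

lemma verts_cycle_graph [simp]: "verts (cycle_graph m) = {0..<m}"
  by (simp add: verts_def cycle_graph_def)

lemma adj_cycle_graph:
  "adj (cycle_graph m) i j \<longleftrightarrow>
     i < m \<and> j < m \<and> i \<noteq> j \<and> (j = (i + 1) mod m \<or> i = (j + 1) mod m)"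
  by (simp add: adj_def cycle_graph_def)

lemma adj_cycle_graph_sym: "adj (cycle_graph m) i j \<longleftrightarrow> adj (cycle_graph m) j i"
  by (auto simp: adj_cycle_graph)

lemma adj_cycle_graph_succ:
  assumes "1 < m" "u < m"
  shows "adj (cycle_graph m) u ((u + 1) mod m)"
proof (cases "u + 1 < m")
  case False
  hence "u + 1 = m" using assms(2) by simp
  thus ?thesis using assms(1) by (auto simp: adj_cycle_graph)
qed (use assms in \<open>auto simp: adj_cycle_graph\<close>)

lemma adj_cycle_graph_pred:
  assumes "1 < m" "u < m"
  shows "adj (cycle_graph m) ((u + m - 1) mod m) u"
proof (cases u)
  case 0
  thus ?thesis using assms(1) by (auto simp: adj_cycle_graph)
next
  case (Suc v)
  hence "(u + m - 1) mod m = v" using assms(2) by simp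
  thus ?thesis using Suc assms(2) by (auto simp: adj_cycle_graph)
qed

lemma adj_cycle_graph_cases:
  assumes "adj (cycle_graph m) u v"
  shows "v = (u + 1) mod m \<or> v = (u + m - 1) mod m"
proof -
  have v: "v < m" "v = (u + 1) mod m \<or> u = (v + 1) mod m"
    using assms by (auto simp: adj_cycle_graph)
  have "v = (u + m - 1) mod m" if u: "u = (v + 1) mod m"
  proof (cases "v + 1 < m")
    case True
    hence "u + m - 1 = v + m" using u by simp
    thus ?thesis using v(1) by simp
  next
    case False
    hence "v + 1 = m" using v(1) by simp
    thus ?thesis using u by simp
  qed
  thus ?thesis using v(2) by blast
qed

lemma card_closed_nbhd_cycle_graph_le:
  assumes "finite X"
  shows "card (closed_nbhd (cycle_graph m) X) \<le> 3 * card X"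
proof -
  have "closed_nbhd (cycle_graph m) X \<subseteq> (\<Union>u\<in>X. {u, (u + 1) mod m, (u + m - 1) mod m})"
    unfolding closed_nbhd_def using adj_cycle_graph_cases by blast
  hence "card (closed_nbhd (cycle_graph m) X)
           \<le> card (\<Union>u\<in>X. {u, (u + 1) mod m, (u + m - 1) mod m})"
    using assms by (intro card_mono) auto
  also have "\<dots> \<le> (\<Sum>u\<in>X. card {u, (u + 1) mod m, (u + m - 1) mod m})"
    by (rule card_UN_le[OF assms])
  also have "\<dots> \<le> (\<Sum>u\<in>X. 3)"
    by (intro sum_mono) (simp add: card_insert_if)
  finally show ?thesis by simp
qed

lemma card_dominating_cycle_graph_ge:
  assumes "finite W" "{0..<m} \<subseteq> closed_nbhd (cycle_graph m) W"
  shows "(m + 2) div 3 \<le> card W"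
proof -
  have "m \<le> card (closed_nbhd (cycle_graph m) W)"
    using assms(2) card_mono[of "closed_nbhd (cycle_graph m) W" "{0..<m}"]
    by (auto simp: closed_nbhd_def)
  thus ?thesis using card_closed_nbhd_cycle_graph_le[OF assms(1), of m] by linarith
qed

lemma closed_nbhd_cycle_graphI:
  assumes "J \<subseteq> {0..<m}" "y < m"
    and "y \<in> J \<or> y + 1 \<in> J \<or> (0 < y \<and> y - 1 \<in> J) \<or> (y + 1 = m \<and> 0 \<in> J)"
  shows "y \<in> closed_nbhd (cycle_graph m) J"
proof -
  have "y \<in> J \<or> (\<exists>u\<in>J. adj (cycle_graph m) u y)"
    using assms(3)
  proof (elim disjE conjE)
    assume "y + 1 \<in> J"
    moreover from this have "adj (cycle_graph m) (y + 1) y"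
      using assms(1) by (auto simp: adj_cycle_graph)
    ultimately show ?thesis by blast
  next
    assume "0 < y" "y - 1 \<in> J"
    moreover from this have "adj (cycle_graph m) (y - 1) y"
      using assms(2) by (auto simp: adj_cycle_graph)
    ultimately show ?thesis by blast
  next
    assume "y + 1 = m" "0 \<in> J"
    moreover from this have "y = 0 \<or> adj (cycle_graph m) 0 y"
      by (auto simp: adj_cycle_graph)
    ultimately show ?thesis by blast
  qed simp
  thus ?thesis using assms(2) by (simp add: closed_nbhd_def)
qed

lemma adj_cycle_graph_rotate:
  assumes "adj (cycle_graph m) u v"
  shows "adj (cycle_graph m) ((a + u) mod m) ((a + v) mod m)"
proof -
  have uv: "u < m" "v < m" "u \<noteq> v" "v = (u + 1) mod m \<or> u = (v + 1) mod m"
    using assms by (auto simp: adj_cycle_graph)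
  have "(a + u) mod m \<noteq> (a + v) mod m"
  proof
    assume eq: "(a + u) mod m = (a + v) mod m"
    have "x = y" if xy: "(a + x) mod m = (a + y) mod m" "x \<le> y" "y < m" for x y
    proof -
      obtain s where "a + y = a + x + m * s"
        using mod_eq_nat1E[OF xy(1)[symmetric]] xy(2) by auto
      thus ?thesis using xy(3) by (cases s) auto
    qed
    from this[OF eq] this[OF eq[symmetric]] show False using uv by linarith
  qed
  moreover have "(a + (w + 1) mod m) mod m = ((a + w) mod m + 1) mod m" for w
    by (simp add: mod_add_right_eq mod_Suc_eq)
  ultimately show ?thesis using uv by (auto simp: adj_cycle_graph)
qed

lemma cycle_rotate_inverse:
  fixes a m x :: nat
  assumes "a < m" "x < m"
  shows "(a + (x + m - a) mod m) mod m = x"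
proof -
  have "(a + (x + m - a) mod m) mod m = (a + (x + m - a)) mod m" by (rule mod_add_right_eq)
  also have "a + (x + m - a) = x + m" using assms(1) by simp
  finally show ?thesis using assms(2) by simp
qed

lemma closed_nbhd_cycle_graph_rotate:
  assumes "a < m" "x < m" "(x + m - a) mod m \<in> closed_nbhd (cycle_graph m) J"
  shows "x \<in> closed_nbhd (cycle_graph m) ((\<lambda>i. (a + i) mod m) ` J)"
proof -
  define y where "y = (x + m - a) mod m"
  have x: "x = (a + y) mod m"
    using cycle_rotate_inverse[OF assms(1,2)] by (simp add: y_def)
  from assms(3) have "y \<in> J \<or> (\<exists>u\<in>J. adj (cycle_graph m) u y)"
    by (simp add: y_def closed_nbhd_def)
  hence "x \<in> (\<lambda>i. (a + i) mod m) ` J \<or>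
      (\<exists>u\<in>(\<lambda>i. (a + i) mod m) ` J. adj (cycle_graph m) u x)"
    unfolding x by (auto intro: adj_cycle_graph_rotate)
  thus ?thesis using assms(2) by (simp add: closed_nbhd_def)
qed

section \<open>Stride-three patterns\<close>

definition stride3 :: "nat \<Rightarrow> nat \<Rightarrow> nat set" where
  "stride3 a l = (\<lambda>i. a + 3 * i) ` {..<(l + 2) div 3}"

lemma mem_stride3_iff: "x \<in> stride3 a l \<longleftrightarrow> (\<exists>i. x = a + 3 * i \<and> 3 * i < l)"
proof -
  have "i < (l + 2) div 3 \<longleftrightarrow> 3 * i < l" for i by linarith
  thus ?thesis by (auto simp: stride3_def)
qed

lemma stride3_covers:
  assumes "a \<le> y" "y < a + l"
  shows "y \<in> stride3 a l \<or> y + 1 \<in> stride3 a l \<or> (0 < y \<and> y - 1 \<in> stride3 a l) \<or> y + 1 = a + l"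
proof -
  define q where "q = (y - a) div 3"
  have y: "y = a + 3 * q + (y - a) mod 3" using assms(1) by (simp add: q_def)
  have "(y - a) mod 3 < 3" by simp
  then consider "(y - a) mod 3 = 0" | "(y - a) mod 3 = 1" | "(y - a) mod 3 = 2" by linarith
  thus ?thesis
  proof cases
    case 1
    hence "y = a + 3 * q" "3 * q < l" using y assms(2) by linarith+
    thus ?thesis unfolding mem_stride3_iff by blast
  next
    case 2
    hence "y - 1 = a + 3 * q" "3 * q < l" "0 < y" using y assms(2) by linarith+
    thus ?thesis unfolding mem_stride3_iff by blast
  next
    case 3
    hence y1: "y + 1 = a + 3 * (q + 1)" "3 * q + 2 < l" using y assms(2) by simp_all
    show ?thesis
    proof (cases "3 * (q + 1) < l")
      case True
      thus ?thesis using y1(1) unfolding mem_stride3_iff by blast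
    next
      case False
      thus ?thesis using y1 by simp
    qed
  qed
qed

lemma card_stride3: "card (stride3 a l) = (l + 2) div 3"
  unfolding stride3_def by (subst card_image) (auto simp: inj_on_def)

text \<open>For \<open>m = 3k + 1\<close> this is a dominating set of \<open>C_m\<close> of minimum size \<open>k + 1\<close> that contains
  both \<open>0\<close> and \<open>d\<close>.\<close>

definition cycle_pattern :: "nat \<Rightarrow> nat \<Rightarrow> nat set" where
  "cycle_pattern m d = stride3 0 d \<union> stride3 d (m - d)"

lemma cycle_pattern_subset: "d \<le> m \<Longrightarrow> cycle_pattern m d \<subseteq> {0..<m}"
  by (auto simp: cycle_pattern_def mem_stride3_iff)

lemma zero_mem_cycle_pattern: "d < m \<Longrightarrow> 0 \<in> cycle_pattern m d"
  by (auto simp: cycle_pattern_def mem_stride3_iff)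

lemma mem_cycle_pattern: "d < m \<Longrightarrow> d \<in> cycle_pattern m d"
  by (auto simp: cycle_pattern_def mem_stride3_iff)

lemma card_cycle_pattern_le: "card (cycle_pattern m d) \<le> (d + 2) div 3 + (m - d + 2) div 3"
  unfolding cycle_pattern_def using card_Un_le card_stride3 by metis

lemma cycle_pattern_dominates:
  assumes "d < m"
  shows "{0..<m} \<subseteq> closed_nbhd (cycle_graph m) (cycle_pattern m d)"
proof
  fix y assume "y \<in> {0..<m}"
  have S: "stride3 0 d \<subseteq> cycle_pattern m d" "stride3 d (m - d) \<subseteq> cycle_pattern m d"
    by (auto simp: cycle_pattern_def)
  have "y \<in> cycle_pattern m d \<or> y + 1 \<in> cycle_pattern m d \<or>
      (0 < y \<and> y - 1 \<in> cycle_pattern m d) \<or> (y + 1 = m \<and> 0 \<in> cycle_pattern m d)"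
  proof (cases "y < d")
    case True
    thus ?thesis using stride3_covers[of 0 y d] S(1) mem_cycle_pattern[OF assms] by auto
  next
    case False
    have m: "d + (m - d) = m" using assms by simp
    have "d \<le> y" "y < d + (m - d)" using False \<open>y \<in> {0..<m}\<close> by auto
    from stride3_covers[OF this] show ?thesis
      unfolding m using S(2) zero_mem_cycle_pattern[OF assms] by blast
  qed
  thus "y \<in> closed_nbhd (cycle_graph m) (cycle_pattern m d)"
    using cycle_pattern_subset[of d m] assms \<open>y \<in> {0..<m}\<close>
    by (intro closed_nbhd_cycle_graphI) auto
qed

lemma stride3_dominates_cycle_minus_vertex:
  assumes "1 \<le> y" "y \<le> 3 * k"
  shows "y \<in> closed_nbhd (cycle_graph (3 * k + 1)) (stride3 2 (3 * k))"
proof (rule closed_nbhd_cycle_graphI)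
  show "stride3 2 (3 * k) \<subseteq> {0..<3 * k + 1}" by (auto simp: mem_stride3_iff)
  show "y < 3 * k + 1" using assms(2) by simp
  show "y \<in> stride3 2 (3 * k) \<or> y + 1 \<in> stride3 2 (3 * k) \<or>
      (0 < y \<and> y - 1 \<in> stride3 2 (3 * k)) \<or> (y + 1 = 3 * k + 1 \<and> 0 \<in> stride3 2 (3 * k))"
  proof (cases "y = 1")
    case True
    hence "y + 1 = 2 + 3 * 0" "3 * 0 < 3 * k" using assms by simp_all
    hence "y + 1 \<in> stride3 2 (3 * k)" unfolding mem_stride3_iff by blast
    thus ?thesis by blast
  next
    case False
    hence "2 \<le> y" "y < 2 + 3 * k" "y + 1 \<noteq> 2 + 3 * k" using assms by simp_all
    thus ?thesis using stride3_covers[of 2 y "3 * k"] by blast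
  qed
qed

lemma cycle_graph_dominating_set_through:
  assumes "a < 3 * k + 1" "b < 3 * k + 1"
  shows "\<exists>R \<subseteq> {0..<3 * k + 1}. a \<in> R \<and> b \<in> R \<and> card R \<le> k + 1 \<and>
           {0..<3 * k + 1} \<subseteq> closed_nbhd (cycle_graph (3 * k + 1)) R"
proof -
  define m where "m = 3 * k + 1"
  define d where "d = (b + m - a) mod m"
  define R where "R = (\<lambda>i. (a + i) mod m) ` cycle_pattern m d"
  have a: "a < m" and b: "b < m" and d: "d < m" using assms by (simp_all add: m_def d_def)
  have "a \<in> R"
    unfolding R_def by (rule rev_image_eqI[OF zero_mem_cycle_pattern[OF d]]) (simp add: a)
  moreover have "b \<in> R"
    unfolding R_def by (rule rev_image_eqI[OF mem_cycle_pattern[OF d]])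
      (simp add: d_def cycle_rotate_inverse[OF a b])
  moreover have "{0..<m} \<subseteq> closed_nbhd (cycle_graph m) R"
  proof
    fix x assume x: "x \<in> {0..<m}"
    have "(x + m - a) mod m \<in> closed_nbhd (cycle_graph m) (cycle_pattern m d)"
      using cycle_pattern_dominates[OF d] d by auto
    thus "x \<in> closed_nbhd (cycle_graph m) R"
      unfolding R_def using a x by (intro closed_nbhd_cycle_graph_rotate) auto
  qed
  moreover have "card R \<le> k + 1"
  proof -
    have "card R \<le> card (cycle_pattern m d)" unfolding R_def by (rule card_image_le)
      (simp add: cycle_pattern_def stride3_def)
    also have "\<dots> \<le> (d + 2) div 3 + (m - d + 2) div 3" by (rule card_cycle_pattern_le)
    also have "\<dots> \<le> k + 1"
    proof -
      have "(d + 2) div 3 * 3 \<le> d + 2" "(m - d + 2) div 3 * 3 \<le> m - d + 2"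
        by (rule div_times_less_eq_dividend)+
      thus ?thesis using d unfolding m_def by linarith
    qed
    finally show ?thesis .
  qed
  moreover have "R \<subseteq> {0..<m}" using d by (auto simp: R_def)
  ultimately show ?thesis unfolding m_def[symmetric] by blast
qed

lemma cycle_graph_dominating_set_avoiding:
  assumes "c < 3 * k + 1"
  shows "\<exists>R \<subseteq> {0..<3 * k + 1}. card R \<le> k \<and>
           {0..<3 * k + 1} - {c} \<subseteq> closed_nbhd (cycle_graph (3 * k + 1)) R"
proof -
  define m where "m = 3 * k + 1"
  define S where "S = stride3 2 (3 * k)"
  define R where "R = (\<lambda>i. (c + i) mod m) ` S"
  have c: "c < m" using assms by (simp add: m_def)
  have "{0..<m} - {c} \<subseteq> closed_nbhd (cycle_graph m) R"
  proof
    fix x assume "x \<in> {0..<m} - {c}"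
    hence x: "x < m" "x \<noteq> c" by simp_all
    let ?y = "(x + m - c) mod m"
    have "?y \<noteq> 0"
    proof
      assume "?y = 0"
      hence "x = c" using cycle_rotate_inverse[OF c x(1)] c by simp
      thus False using x(2) by simp
    qed
    moreover have "?y < m" using c by simp
    ultimately have "1 \<le> ?y" "?y \<le> 3 * k" by (simp_all add: m_def)
    from stride3_dominates_cycle_minus_vertex[OF this]
    show "x \<in> closed_nbhd (cycle_graph m) R" unfolding R_def S_def m_def
      using c x(1) by (intro closed_nbhd_cycle_graph_rotate) (simp_all add: m_def)
  qed
  moreover have "card R \<le> k"
  proof -
    have "card R \<le> card S" unfolding R_def by (rule card_image_le) (simp add: S_def stride3_def)
    also have "card S = k" by (simp add: S_def card_stride3)
    finally show ?thesis .
  qed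
  moreover have "R \<subseteq> {0..<m}" using c by (auto simp: R_def)
  ultimately show ?thesis unfolding m_def[symmetric] by blast
qed

section \<open>Sierpinski products of cycles\<close>

abbreviation cycle_sierpinski :: "nat \<Rightarrow> nat \<Rightarrow> (nat \<Rightarrow> nat) \<Rightarrow> (nat \<times> nat) graph" where
  "cycle_sierpinski n m f \<equiv> sierpinski_product (cycle_graph n) (cycle_graph m) f"

lemma dominating_cycle_sierpinski_subset:
  "dominating_set (cycle_sierpinski n m f) D \<Longrightarrow> D \<subseteq> {0..<n} \<times> {0..<m}"
  by (simp add: dominating_set_def)

lemma card_copy_le_fibre_bound:
  assumes "dominating_set (cycle_sierpinski n m f) D" "g < n"
  shows "m \<le> 3 * card (fibre D g) +
           card (f ` {g' \<in> {0..<n}. adj (cycle_graph n) g' g \<and> (g', f g) \<in> D})"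
    (is "_ \<le> _ + card ?E")
proof -
  let ?N = "closed_nbhd (cycle_graph m) (fibre D g)"
  have "\<forall>g \<in> {0..<n}. {0..<m} \<subseteq> closed_nbhd (cycle_graph m) (fibre D g) \<union>
      f ` {g' \<in> {0..<n}. adj (cycle_graph n) g' g \<and> (g', f g) \<in> D}"
    using assms(1) unfolding dominating_set_sierpinski_product_iff verts_cycle_graph by blast
  hence cover: "{0..<m} \<subseteq> ?N \<union> ?E" using assms(2) by simp
  have "finite ?N" by (rule finite_subset[of _ "{0..<m}"]) (auto simp: closed_nbhd_def)
  moreover have "finite ?E" by (rule finite_imageI) (rule finite_subset[of _ "{0..<n}"], auto)
  ultimately have "card {0..<m} \<le> card (?N \<union> ?E)" by (intro card_mono[OF _ cover]) simp
  hence "m \<le> card (?N \<union> ?E)" by simp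
  also have "\<dots> \<le> card ?N + card ?E" by (rule card_Un_le)
  also have "\<dots> \<le> 3 * card (fibre D g) + card ?E"
  proof -
    have "fibre D g \<subseteq> {0..<m}"
      using dominating_cycle_sierpinski_subset[OF assms(1)] by (auto simp: fibre_def)
    hence "finite (fibre D g)" by (rule finite_subset) simp
    thus ?thesis using card_closed_nbhd_cycle_graph_le by simp
  qed
  finally show ?thesis .
qed

lemma card_image_cycle_neighbours_le:
  "card (f ` {g' \<in> {0..<n}. adj (cycle_graph n) g' g \<and> P g'}) \<le> 2"
proof -
  have "{g' \<in> {0..<n}. adj (cycle_graph n) g' g \<and> P g'} \<subseteq> {(g + 1) mod n, (g + n - 1) mod n}"
    using adj_cycle_graph_cases adj_cycle_graph_sym by blast
  hence "card (f ` {g' \<in> {0..<n}. adj (cycle_graph n) g' g \<and> P g'})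
           \<le> card {f ((g + 1) mod n), f ((g + n - 1) mod n)}"
    by (intro card_mono) auto
  also have "\<dots> \<le> 2" by (simp add: card_insert_if)
  finally show ?thesis .
qed

lemma card_fibre_dominating_cycle_sierpinski_ge:
  assumes "dominating_set (cycle_sierpinski n m f) D" "g < n"
  shows "m div 3 \<le> card (fibre D g)"
proof -
  have "m div 3 * 3 \<le> m" by (rule div_times_less_eq_dividend)
  thus ?thesis
    using card_copy_le_fibre_bound[OF assms]
      card_image_cycle_neighbours_le[of f n g "\<lambda>g'. (g', f g) \<in> D"]
    by linarith
qed

lemma card_fibre_dominating_cycle_sierpinski_const_ge:
  assumes "dominating_set (cycle_sierpinski n m (\<lambda>_. c)) D" "g < n"
  shows "(m + 1) div 3 \<le> card (fibre D g)"
proof -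
  have "card ((\<lambda>_. c) ` {g' \<in> {0..<n}. adj (cycle_graph n) g' g \<and> (g', c) \<in> D}) \<le> card {c}"
    by (intro card_mono) auto
  moreover have "(m + 1) div 3 * 3 \<le> m + 1" by (rule div_times_less_eq_dividend)
  ultimately show ?thesis using card_copy_le_fibre_bound[OF assms] by simp
qed

lemma card_ge_sum_fibre:
  fixes n m :: nat
  assumes "D \<subseteq> {0..<n} \<times> {0..<m}" "\<And>g. g < n \<Longrightarrow> c g \<le> card (fibre D g)"
  shows "(\<Sum>g\<in>{0..<n}. c g) \<le> card D"
proof -
  have "(\<Sum>g\<in>{0..<n}. c g) \<le> (\<Sum>g\<in>{0..<n}. card (fibre D g))"
    using assms(2) by (intro sum_mono) simp
  also have "\<dots> = card D"
    by (rule card_eq_sum_card_fibre[OF assms(1) finite_atLeastLessThan finite_atLeastLessThan, symmetric])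
  finally show ?thesis .
qed

lemma card_dominating_cycle_sierpinski_ge:
  assumes "dominating_set (cycle_sierpinski n m f) D"
  shows "n * (m div 3) \<le> card D"
  using card_ge_sum_fibre[OF dominating_cycle_sierpinski_subset[OF assms], of "\<lambda>_. m div 3"]
    card_fibre_dominating_cycle_sierpinski_ge[OF assms]
  by simp

lemma card_dominating_cycle_sierpinski_const_ge:
  assumes "dominating_set (cycle_sierpinski n m (\<lambda>_. c)) D"
  shows "n * ((m + 1) div 3) \<le> card D"
  using card_ge_sum_fibre[OF dominating_cycle_sierpinski_subset[OF assms], of "\<lambda>_. (m + 1) div 3"]
    card_fibre_dominating_cycle_sierpinski_const_ge[OF assms]
  by simp

text \<open>The \<open>k\<close> vertices of the fibre dominate at most \<open>3k\<close> of the \<open>3k + 1\<close> vertices of the copy;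
  the rest needs a type-2 edge, and for \<open>f = 0\<close> these only reach the vertex \<open>0\<close>.\<close>

lemma small_fibre_dominated_from_neighbour:
  assumes "dominating_set (cycle_sierpinski n (3 * k + 1) (\<lambda>_. 0)) D" "g < n"
    and "card (fibre D g) \<le> k"
  shows "(g, 0) \<notin> D \<and> (\<exists>g' < n. adj (cycle_graph n) g' g \<and> (g', 0) \<in> D)"
proof -
  let ?N = "closed_nbhd (cycle_graph (3 * k + 1)) (fibre D g)"
  let ?S = "{g' \<in> {0..<n}. adj (cycle_graph n) g' g \<and> (g', 0) \<in> D}"
  have "\<forall>g \<in> {0..<n}. {0..<3 * k + 1} \<subseteq> closed_nbhd (cycle_graph (3 * k + 1)) (fibre D g) \<union>
      (\<lambda>_. 0) ` {g' \<in> {0..<n}. adj (cycle_graph n) g' g \<and> (g', 0) \<in> D}"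
    using assms(1) unfolding dominating_set_sierpinski_product_iff verts_cycle_graph by blast
  hence cover: "{0..<3 * k + 1} \<subseteq> ?N \<union> (\<lambda>_. 0) ` ?S" using assms(2) by simp
  have "fibre D g \<subseteq> {0..<3 * k + 1}"
    using dominating_cycle_sierpinski_subset[OF assms(1)] by (auto simp: fibre_def)
  hence "finite (fibre D g)" by (rule finite_subset) simp
  hence card_N: "card ?N \<le> 3 * k"
    using card_closed_nbhd_cycle_graph_le[of "fibre D g" "3 * k + 1"] assms(3) by linarith
  have "\<not> {0..<3 * k + 1} \<subseteq> ?N"
  proof
    assume "{0..<3 * k + 1} \<subseteq> ?N"
    moreover have "finite ?N" by (rule finite_subset[of _ "{0..<3 * k + 1}"]) (auto simp: closed_nbhd_def)
    ultimately have "card {0..<3 * k + 1} \<le> card ?N" by (intro card_mono)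
    thus False using card_N by simp
  qed
  then obtain x where x: "x \<in> {0..<3 * k + 1}" "x \<notin> ?N" by blast
  with cover have "x \<in> (\<lambda>_. 0) ` ?S" by blast
  hence "x = 0" "?S \<noteq> {}" by blast+
  from x \<open>x = 0\<close> have "(g, 0) \<notin> D" by (simp add: closed_nbhd_def fibre_def)
  moreover from \<open>?S \<noteq> {}\<close> have "\<exists>g' < n. adj (cycle_graph n) g' g \<and> (g', 0) \<in> D" by auto
  ultimately show ?thesis by blast
qed

lemma card_dominating_cycle_sierpinski_3k1_ge:
  assumes "dominating_set (cycle_sierpinski n (3 * k + 1) (\<lambda>_. 0)) D"
  shows "k * n + (n + 2) div 3 \<le> card D"
proof -
  define W where "W = {g \<in> {0..<n}. k < card (fibre D g)}"
  have "{0..<n} \<subseteq> closed_nbhd (cycle_graph n) W"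
  proof
    fix g assume g: "g \<in> {0..<n}"
    show "g \<in> closed_nbhd (cycle_graph n) W"
    proof (cases "g \<in> W")
      case True
      thus ?thesis using g by (simp add: closed_nbhd_def)
    next
      case False
      hence "card (fibre D g) \<le> k" using g by (simp add: W_def)
      then obtain g' where g': "g' < n" "adj (cycle_graph n) g' g" "(g', 0) \<in> D"
        using small_fibre_dominated_from_neighbour[OF assms] g by auto
      have "g' \<in> W"
      proof (rule ccontr)
        assume "g' \<notin> W"
        hence "card (fibre D g') \<le> k" using g'(1) by (simp add: W_def)
        thus False using small_fibre_dominated_from_neighbour[OF assms g'(1)] g'(3) by blast
      qed
      thus ?thesis using g g'(2) by (auto simp: closed_nbhd_def)
    qed
  qed
  hence W: "(n + 2) div 3 \<le> card W"
    by (intro card_dominating_cycle_graph_ge) (simp_all add: W_def)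
  have "(\<Sum>g\<in>{0..<n}. k + (if g \<in> W then 1 else 0)) \<le> card D"
  proof (rule card_ge_sum_fibre[OF dominating_cycle_sierpinski_subset[OF assms]])
    fix g assume "g < n"
    have "(3 * k + 1 + 1) div 3 = k" by simp
    thus "k + (if g \<in> W then 1 else 0) \<le> card (fibre D g)"
      using card_fibre_dominating_cycle_sierpinski_const_ge[OF assms \<open>g < n\<close>] \<open>g < n\<close>
      by (auto simp: W_def)
  qed
  moreover have "(\<Sum>g\<in>{0..<n}. k + (if g \<in> W then 1 else 0)) = k * n + card W"
  proof -
    have "(\<Sum>g\<in>{0..<n}. (if g \<in> W then 1 else 0 :: nat)) = card W"
      using sum.inter_filter[of "{0..<n}" "\<lambda>_. 1 :: nat" "\<lambda>g. g \<in> W"] by (simp add: W_def)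
    thus ?thesis by (simp add: sum.distrib mult.commute)
  qed
  ultimately show ?thesis using W by linarith
qed

lemma domination_number_cycle_sierpinski_le:
  assumes "0 < m"
  shows "domination_number (cycle_sierpinski n m f) \<le> n * ((m + 2) div 3)"
proof -
  have "domination_number (cycle_sierpinski n m f)
          \<le> (\<Sum>g\<in>verts (cycle_graph n). card (cycle_pattern m 0))"
    by (rule domination_number_sierpinski_product_le)
      (use cycle_pattern_subset[of 0 m] cycle_pattern_dominates[OF assms] in auto)
  also have "\<dots> \<le> n * ((m + 2) div 3)" using card_cycle_pattern_le[of m 0] by simp
  finally show ?thesis .
qed

text \<open>The hub of a copy \<open>g\<close> not divisible by three is its neighbour divisible by three; for
  \<open>g = n - 1\<close> with \<open>n - 1 \<equiv> 2 (mod 3)\<close> this is \<open>0\<close>, across the wrap-around of \<open>C_n\<close>.\<close>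

definition hub :: "nat \<Rightarrow> nat \<Rightarrow> nat" where
  "hub n g = (if g mod 3 = 1 then g - 1 else (g + 1) mod n)"

lemma hub_neighbour:
  assumes "3 \<le> n" "g < n" "g mod 3 \<noteq> 0"
  shows "hub n g < n" "hub n g mod 3 = 0"
    and "g = (hub n g + 1) mod n \<or> g = (hub n g + n - 1) mod n"
proof -
  consider "g mod 3 = 1" | "g mod 3 = 2" "g + 1 < n" | "g mod 3 = 2" "g + 1 = n"
    using assms(2,3) by linarith
  hence "hub n g < n \<and> hub n g mod 3 = 0 \<and> (g = (hub n g + 1) mod n \<or> g = (hub n g + n - 1) mod n)"
  proof cases
    case 1
    moreover from this have "1 \<le> g" "(g - 1) mod 3 = 0" by presburger+
    ultimately show ?thesis using assms(2) by (simp add: hub_def)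
  next
    case 2
    moreover from this have "(g + 1) mod 3 = 0" by presburger
    moreover have "(g + 1 + n - 1) mod n = g" using assms(2) by simp
    ultimately show ?thesis by (simp add: hub_def)
  next
    case 3
    thus ?thesis using assms(1) by (simp add: hub_def)
  qed
  thus "hub n g < n" "hub n g mod 3 = 0" "g = (hub n g + 1) mod n \<or> g = (hub n g + n - 1) mod n"
    by blast+
qed

lemma card_multiples_of_three: "card {g \<in> {0..<n}. g mod 3 = 0} = (n + 2) div 3"
proof -
  have "{g \<in> {0..<n}. g mod 3 = 0} = stride3 0 n"
  proof (rule set_eqI)
    fix x
    have "(x < n \<and> x mod 3 = 0) \<longleftrightarrow> (\<exists>i. x = 0 + 3 * i \<and> 3 * i < n)" by presburger
    thus "x \<in> {g \<in> {0..<n}. g mod 3 = 0} \<longleftrightarrow> x \<in> stride3 0 n"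
      unfolding mem_stride3_iff by simp
  qed
  thus ?thesis by (simp add: card_stride3)
qed

lemma hub_construction_covers:
  assumes "3 \<le> n" "f ` {0..<n} \<subseteq> {0..<m}" "g < n"
    and hub_copy: "\<And>h. h < n \<Longrightarrow> h mod 3 = 0 \<Longrightarrow> f ((h + n - 1) mod n) \<in> C h \<and>
          f ((h + 1) mod n) \<in> C h \<and> {0..<m} \<subseteq> closed_nbhd (cycle_graph m) (C h)"
    and other_copy: "\<And>g'. g' < n \<Longrightarrow> g' mod 3 \<noteq> 0 \<Longrightarrow>
          {0..<m} - {f (hub n g')} \<subseteq> closed_nbhd (cycle_graph m) (C g')"
  shows "{0..<m} \<subseteq> closed_nbhd (cycle_graph m) (C g) \<union>
           f ` {g' \<in> {0..<n}. adj (cycle_graph n) g' g \<and> f g \<in> C g'}"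
proof (cases "g mod 3 = 0")
  case True
  hence "{0..<m} \<subseteq> closed_nbhd (cycle_graph m) (C g)" using hub_copy[OF assms(3)] by simp
  thus ?thesis by (rule order_trans) (rule Un_upper1)
next
  case False
  let ?h = "hub n g"
  note h = hub_neighbour[OF assms(1,3) False]
  have n: "1 < n" using assms(1) by simp
  from h(3) have "adj (cycle_graph n) ?h g"
  proof
    assume "g = (?h + 1) mod n"
    thus ?thesis using adj_cycle_graph_succ[OF n h(1)] by simp
  next
    assume "g = (?h + n - 1) mod n"
    thus ?thesis using adj_cycle_graph_pred[OF n h(1)] adj_cycle_graph_sym by simp
  qed
  moreover from h(3) have "f g \<in> C ?h" using hub_copy[OF h(1,2)] by (elim disjE) simp_all
  ultimately have "f ?h \<in> f ` {g' \<in> {0..<n}. adj (cycle_graph n) g' g \<and> f g \<in> C g'}"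
    using h(1) by simp
  moreover have "{0..<m} - {f ?h} \<subseteq> closed_nbhd (cycle_graph m) (C g)"
    by (rule other_copy[OF assms(3) False])
  ultimately show ?thesis by blast
qed

lemma domination_number_cycle_sierpinski_3k1_le:
  assumes "3 \<le> n" "f ` {0..<n} \<subseteq> {0..<3 * k + 1}"
  shows "domination_number (cycle_sierpinski n (3 * k + 1) f) \<le> k * n + (n + 2) div 3"
proof -
  define m where "m = 3 * k + 1"
  define T where "T a b = (SOME R. R \<subseteq> {0..<m} \<and> a \<in> R \<and> b \<in> R \<and> card R \<le> k + 1 \<and>
    {0..<m} \<subseteq> closed_nbhd (cycle_graph m) R)" for a b
  define A where "A c = (SOME R. R \<subseteq> {0..<m} \<and> card R \<le> k \<and>
    {0..<m} - {c} \<subseteq> closed_nbhd (cycle_graph m) R)" for c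
  have T: "T a b \<subseteq> {0..<m} \<and> a \<in> T a b \<and> b \<in> T a b \<and> card (T a b) \<le> k + 1 \<and>
      {0..<m} \<subseteq> closed_nbhd (cycle_graph m) (T a b)" if "a < m" "b < m" for a b
    unfolding T_def m_def
    by (rule someI_ex) (use cycle_graph_dominating_set_through that in \<open>simp add: m_def\<close>)
  have A: "A c \<subseteq> {0..<m} \<and> card (A c) \<le> k \<and> {0..<m} - {c} \<subseteq> closed_nbhd (cycle_graph m) (A c)"
    if "c < m" for c
    unfolding A_def m_def
    by (rule someI_ex) (use cycle_graph_dominating_set_avoiding that in \<open>simp add: m_def\<close>)
  have f: "f g < m" if "g < n" for g
    using assms(2) that unfolding m_def image_subset_iff by simp
  define C where "C g = (if g mod 3 = 0 then T (f ((g + n - 1) mod n)) (f ((g + 1) mod n))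
    else A (f (hub n g)))" for g
  have C: "C g \<subseteq> {0..<m} \<and> card (C g) \<le> k + (if g mod 3 = 0 then 1 else 0)" if "g < n" for g
    using T[OF f f] A[OF f] hub_neighbour(1)[OF assms(1) that] assms(1) that by (simp add: C_def)
  have "domination_number (cycle_sierpinski n m f) \<le> (\<Sum>g\<in>verts (cycle_graph n). card (C g))"
  proof (rule domination_number_sierpinski_product_le)
    fix g assume "g \<in> verts (cycle_graph n)"
    hence g: "g < n" by simp
    show "C g \<subseteq> verts (cycle_graph m)" using C[OF g] by simp
    have "{0..<m} \<subseteq> closed_nbhd (cycle_graph m) (C g) \<union>
        f ` {g' \<in> {0..<n}. adj (cycle_graph n) g' g \<and> f g \<in> C g'}"
      using assms(1,2) g T[OF f f] A[OF f] hub_neighbour(1)[OF assms(1)]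
      by (intro hub_construction_covers) (auto simp: C_def m_def)
    thus "verts (cycle_graph m) \<subseteq> closed_nbhd (cycle_graph m) (C g) \<union>
        f ` {g' \<in> verts (cycle_graph n). adj (cycle_graph n) g' g \<and> f g \<in> C g'}"
      by simp
  qed simp_all
  also have "\<dots> \<le> (\<Sum>g\<in>{0..<n}. k + (if g mod 3 = 0 then 1 else 0))"
    unfolding verts_cycle_graph by (rule sum_mono) (use C in simp)
  also have "\<dots> = k * n + card {g \<in> {0..<n}. g mod 3 = 0}"
    using sum.inter_filter[of "{0..<n}" "\<lambda>_. 1 :: nat" "\<lambda>g. g mod 3 = 0"]
    by (simp add: sum.distrib mult.commute)
  finally show ?thesis unfolding m_def card_multiples_of_three .
qed

lemma upper_sierpinski_domination_cycle_3k:
  assumes "1 \<le> k"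
  shows "upper_sierpinski_domination (cycle_graph n) (cycle_graph (3 * k)) = k * n"
proof (rule upper_sierpinski_domination_eqI[where f\<^sub>0 = "\<lambda>_. 0"])
  show "(\<lambda>_. 0) ` verts (cycle_graph n) \<subseteq> verts (cycle_graph (3 * k))" using assms by auto
  have "(3 * k + 2) div 3 = k" by simp
  thus "domination_number (cycle_sierpinski n (3 * k) f) \<le> k * n" for f
    using domination_number_cycle_sierpinski_le[of "3 * k" n f] assms by (simp add: mult.commute)
  show "k * n \<le> card D" if "dominating_set (cycle_sierpinski n (3 * k) (\<lambda>_. 0)) D" for D
    using card_dominating_cycle_sierpinski_ge[OF that] by (simp add: mult.commute)
qed simp_all

lemma upper_sierpinski_domination_cycle_3k1:
  assumes "3 \<le> n"
  shows "upper_sierpinski_domination (cycle_graph n) (cycle_graph (3 * k + 1)) =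
           k * n + (n + 2) div 3"
proof (rule upper_sierpinski_domination_eqI[where f\<^sub>0 = "\<lambda>_. 0"])
  show "domination_number (cycle_sierpinski n (3 * k + 1) f) \<le> k * n + (n + 2) div 3"
    if "f ` verts (cycle_graph n) \<subseteq> verts (cycle_graph (3 * k + 1))" for f
    using domination_number_cycle_sierpinski_3k1_le[OF assms] that by simp
  show "k * n + (n + 2) div 3 \<le> card D"
    if "dominating_set (cycle_sierpinski n (3 * k + 1) (\<lambda>_. 0)) D" for D
    by (rule card_dominating_cycle_sierpinski_3k1_ge[OF that])
qed auto

lemma upper_sierpinski_domination_cycle_3k2:
  "upper_sierpinski_domination (cycle_graph n) (cycle_graph (3 * k + 2)) = (k + 1) * n"
proof (rule upper_sierpinski_domination_eqI[where f\<^sub>0 = "\<lambda>_. 0"])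
  show "domination_number (cycle_sierpinski n (3 * k + 2) f) \<le> (k + 1) * n" for f
    using domination_number_cycle_sierpinski_le[of "3 * k + 2" n f] by (simp add: mult.commute)
  show "(k + 1) * n \<le> card D" if "dominating_set (cycle_sierpinski n (3 * k + 2) (\<lambda>_. 0)) D" for D
    using card_dominating_cycle_sierpinski_const_ge[OF that] by (simp add: mult.commute)
qed auto

lemma nat_ceiling_real_div_3: "nat \<lceil>real n / 3\<rceil> = (n + 2) div 3"
proof -
  have "\<lceil>real n / 3\<rceil> = - (- int n div 3)"
    using ceiling_divide_eq_div[of "int n" 3] by simp
  also have "\<dots> = int ((n + 2) div 3)" by presburger
  finally show ?thesis by simp
qed

theorem theorem3p2:
  fixes n k p :: nat
  assumes "n \<ge> 3" and "k \<ge> 1" and "p \<in> {0, 1, 2}"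
  shows "upper_sierpinski_domination (cycle_graph n) (cycle_graph (3 * k + p)) =
           (if p = 0 then k * n
            else if p = 1 then k * n + nat \<lceil>real n / 3\<rceil>
            else (k + 1) * n)"
  using assms upper_sierpinski_domination_cycle_3k[OF assms(2)]
    upper_sierpinski_domination_cycle_3k1[OF assms(1)] upper_sierpinski_domination_cycle_3k2
  by (auto simp: nat_ceiling_real_div_3)

end
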